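(* Let $k\ge1$, $a_i,b_i,c_i\in\mathbb{C}$ ($1\le i\le k$), with symbol $f$ and tridiagonal $k$-Toeplitz operator $T(f)$ as in the context. For $\lambda\in\mathbb{C}\setminus\sigma_{ess}(T(f))$ and $z\in\mathbb{C}\setminus\{0\}$, $$\det(f(z)-\lambda I)=(-1)^{k+1}\Big(\prod_{i=1}^kc_i\Big)z+(-1)^{k+1}\Big(\prod_{i=1}^kb_i\Big)z^{-1}+g(\lambda),$$ where $g(\lambda)=\det(A_0-\lambda I)-b_kc_k\,p(\lambda)$ is a polynomial in $\lambda$ of degree $k$, with $p(\lambda)=0$ if $k=1$, $p(\lambda)=1$ if $k=2$, and for $k\ge3$, $p(\lambda)$ the determinant of the $(k-2)\times(k-2)$ tridiagonal matrix with diagonal $a_2-\lambda,\dots,a_{k-1}-\lambda$, superdiagonal $b_2,\dots,b_{k-2}$ and subdiagonal $c_2,\dots,c_{k-2}$. In particular, there are at most $2k$ values $\lambda\in\mathbb{C}$ for which the equation $\det(f(z)-\lambda I)=0$ (in $z$) admits a double root.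
   Context: The tridiagonal $k$-Toeplitz operator $T(f)$ on $\ell^2(\mathbb{N})$ has matrix entries $(i,i)=a_{p(i)}$, $(i,i+1)=b_{p(i)}$, $(i+1,i)=c_{p(i)}$ with index map $i\mapsto((i-1)\bmod k)+1$, all other entries zero. Its symbol is $f(z)=A_{-1}z^{-1}+A_0+A_1z$, where $A_0$ is the $k\times k$ tridiagonal matrix with diagonal $a_1,\dots,a_k$, superdiagonal $b_1,\dots,b_{k-1}$, subdiagonal $c_1,\dots,c_{k-1}$; $A_{-1}$ has single nonzero entry $b_k$ at $(k,1)$; $A_1$ has single nonzero entry $c_k$ at $(1,k)$ (for $k=1$, $f(z)=a_1+c_1z+b_1z^{-1}$). $\sigma_{ess}$ denotes the essential spectrum. *)

theory Defs
  imports "Jordan_Normal_Form.Determinant" "HOL-Computational_Algebra.Polynomial"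
begin

text \<open>Coefficients a, b, c are indexed 1..k as in the paper; matrix rows/columns are
  0-based in Jordan_Normal_Form, so entry (i,j) (0-based) is paper entry (i+1,j+1).\<close>

definition A0 :: "nat \<Rightarrow> (nat \<Rightarrow> complex) \<Rightarrow> (nat \<Rightarrow> complex) \<Rightarrow> (nat \<Rightarrow> complex)
    \<Rightarrow> complex mat" where
  "A0 k a b c = mat k k (\<lambda>(i,j).
      (if i = j then a (i+1) else 0)
    + (if j = i + 1 then b (i+1) else 0)
    + (if i = j + 1 then c (j+1) else 0))"

text \<open>The symbol f(z) = A_(-1) z^(-1) + A_0 + A_1 z, where A_(-1) has the single
  nonzero entry b_k at (k,1) and A_1 has the single nonzero entry c_k at (1,k).
  (For k = 1 this gives a_1 + c_1 z + b_1 z^(-1).)\<close>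
definition symbol :: "nat \<Rightarrow> (nat \<Rightarrow> complex) \<Rightarrow> (nat \<Rightarrow> complex) \<Rightarrow> (nat \<Rightarrow> complex)
    \<Rightarrow> complex \<Rightarrow> complex mat" where
  "symbol k a b c z = A0 k a b c
     + mat k k (\<lambda>(i,j). if i = k - 1 \<and> j = 0 then b k * inverse z else 0)
     + mat k k (\<lambda>(i,j). if i = 0 \<and> j = k - 1 then c k * z else 0)"

definition pdet :: "nat \<Rightarrow> (nat \<Rightarrow> complex) \<Rightarrow> (nat \<Rightarrow> complex) \<Rightarrow> (nat \<Rightarrow> complex)
    \<Rightarrow> complex \<Rightarrow> complex" where
  "pdet k a b c lam = (if k = 1 then 0 else
     det (mat (k-2) (k-2) (\<lambda>(i,j).
        (if i = j then a (i+2) - lam else 0)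
      + (if j = i + 1 then b (i+2) else 0)
      + (if i = j + 1 then c (j+2) else 0))))"

definition double_root :: "nat \<Rightarrow> (nat \<Rightarrow> complex) \<Rightarrow> (nat \<Rightarrow> complex) \<Rightarrow> (nat \<Rightarrow> complex)
    \<Rightarrow> complex \<Rightarrow> complex \<Rightarrow> bool" where
  "double_root k a b c lam z0 \<longleftrightarrow> z0 \<noteq> 0 \<and>
     det (symbol k a b c z0 - lam \<cdot>\<^sub>m 1\<^sub>m k) = 0 \<and>
     ((\<lambda>z. det (symbol k a b c z - lam \<cdot>\<^sub>m 1\<^sub>m k)) has_field_derivative 0) (at z0)"

end

theory Submission
  imports Defs
begin

text \<open>The matrix f(z) - \<lambda>I is tridiagonal apart from the two corner entries b_k/z and
  c_k z. Expanding its determinant along the last row, the corners contribute in three ways: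
  their product multiplies the determinant of the inner (k-2) \<times> (k-2) block, and each corner
  alone multiplies a triangular minor whose diagonal consists of all the remaining b_i
  (respectively c_i). This gives det(f(z) - \<lambda>I) = C z + B/z + g(\<lambda>), where
  g(\<lambda>) is the continuant of A_0 - \<lambda>I corrected by a continuant of lower degree, so
  g has degree k with leading coefficient (-1)^k. At a double root z \<noteq> 0 of
  C z + B/z + g we have C z^2 = B and then g = -2Cz, so g(\<lambda>)^2 = 4BC:
  a nontrivial polynomial equation of degree 2k in \<lambda>.\<close>

definition tridiag_mat :: "nat \<Rightarrow> (nat \<Rightarrow> 'a::zero) \<Rightarrow> (nat \<Rightarrow> 'a) \<Rightarrow> (nat \<Rightarrow> 'a) \<Rightarrow> 'a mat" where
  "tridiag_mat n d u l = mat n n (\<lambda>(i,j).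
     if i = j then d i else if j = Suc i then u i else if i = Suc j then l j else 0)"

definition cyclic_tridiag_mat ::
    "nat \<Rightarrow> (nat \<Rightarrow> 'a::comm_ring_1) \<Rightarrow> (nat \<Rightarrow> 'a) \<Rightarrow> (nat \<Rightarrow> 'a) \<Rightarrow> 'a \<Rightarrow> 'a \<Rightarrow> 'a mat" where
  "cyclic_tridiag_mat n d u l \<beta> \<gamma> = mat n n (\<lambda>(i,j).
     (if i = j then d i else if j = Suc i then u i else if i = Suc j then l j else 0)
     + (if i = n - 1 \<and> j = 0 then \<beta> else 0) + (if i = 0 \<and> j = n - 1 then \<gamma> else 0))"

fun continuant :: "(nat \<Rightarrow> 'a::comm_ring_1) \<Rightarrow> (nat \<Rightarrow> 'a) \<Rightarrow> (nat \<Rightarrow> 'a) \<Rightarrow> nat \<Rightarrow> 'a" where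
  "continuant d u l 0 = 1"
| "continuant d u l (Suc 0) = d 0"
| "continuant d u l (Suc (Suc n)) =
     d (Suc n) * continuant d u l (Suc n) - u n * l n * continuant d u l n"

lemma laplace_expansion_row_sparse:
  assumes A: "(A :: 'a :: comm_ring_1 mat) \<in> carrier_mat n n" and i: "i < n"
    and S: "S \<subseteq> {..<n}" and zero: "\<And>j. j < n \<Longrightarrow> j \<notin> S \<Longrightarrow> A $$ (i,j) = 0"
  shows "det A = (\<Sum>j\<in>S. A $$ (i,j) * cofactor A i j)"
proof -
  have "det A = (\<Sum>j<n. A $$ (i,j) * cofactor A i j)" by (rule laplace_expansion_row[OF A i])
  also have "\<dots> = (\<Sum>j\<in>S. A $$ (i,j) * cofactor A i j)"
    by (rule sum.mono_neutral_right) (use S zero in auto)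
  finally show ?thesis .
qed

lemma laplace_expansion_column_sparse:
  assumes A: "(A :: 'a :: comm_ring_1 mat) \<in> carrier_mat n n" and j: "j < n"
    and S: "S \<subseteq> {..<n}" and zero: "\<And>i. i < n \<Longrightarrow> i \<notin> S \<Longrightarrow> A $$ (i,j) = 0"
  shows "det A = (\<Sum>i\<in>S. A $$ (i,j) * cofactor A i j)"
proof -
  have "det A = (\<Sum>i<n. A $$ (i,j) * cofactor A i j)" by (rule laplace_expansion_column[OF A j])
  also have "\<dots> = (\<Sum>i\<in>S. A $$ (i,j) * cofactor A i j)"
    by (rule sum.mono_neutral_right) (use S zero in auto)
  finally show ?thesis .
qed

lemma det_tridiag_mat: "det (tridiag_mat n d u l) = continuant d u l n"
proof (induction d u l n rule: continuant.induct)
  case (1 d u l)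
  then show ?case by (simp add: tridiag_mat_def)
next
  case (2 d u l)
  then show ?case by (subst det_single) (auto simp: tridiag_mat_def)
next
  case (3 d u l m)
  let ?T = "tridiag_mat (Suc (Suc m)) d u l"
  define N where "N = mat_delete ?T (Suc m) m"
  have N_carrier: "N \<in> carrier_mat (Suc m) (Suc m)"
    by (simp add: N_def tridiag_mat_def mat_delete_def)
  have minor_N: "mat_delete N m m = tridiag_mat m d u l"
    by (rule eq_matI) (auto simp: N_def tridiag_mat_def mat_delete_def)
  have "det N = N $$ (m, m) * cofactor N m m"
    by (subst laplace_expansion_column_sparse[OF N_carrier, of m "{m}"])
      (auto simp: N_def tridiag_mat_def mat_delete_def)
  also have "\<dots> = u m * continuant d u l m"
    by (simp add: cofactor_def minor_N "3.IH"(2)) (simp add: N_def tridiag_mat_def mat_delete_def)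
  finally have det_N: "det N = u m * continuant d u l m" .
  have minor_T: "mat_delete ?T (Suc m) (Suc m) = tridiag_mat (Suc m) d u l"
    by (rule eq_matI) (auto simp: tridiag_mat_def mat_delete_def)
  have "det ?T = ?T $$ (Suc m, m) * cofactor ?T (Suc m) m
      + ?T $$ (Suc m, Suc m) * cofactor ?T (Suc m) (Suc m)"
    by (subst laplace_expansion_row_sparse[of _ "Suc (Suc m)" "Suc m" "{m, Suc m}"])
      (auto simp: tridiag_mat_def)
  also have "\<dots> = l m * - det N + d (Suc m) * continuant d u l (Suc m)"
    by (simp add: cofactor_def minor_T "3.IH"(1) N_def[symmetric]) (simp add: tridiag_mat_def)
  finally show ?case by (simp add: det_N)
qed

lemma det_cyclic_tridiag_mat_delete_last_row_subdiag:
  fixes m :: nat and d u l :: "nat \<Rightarrow> 'a::comm_ring_1" and \<beta> \<gamma> :: 'a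
  defines "N \<equiv> mat_delete (cyclic_tridiag_mat (Suc (Suc (Suc m))) d u l \<beta> \<gamma>) (Suc (Suc m)) (Suc m)"
  shows "det N = \<gamma> * (-1)^(Suc m) * (\<Prod>r<Suc m. l r) + u (Suc m) * continuant d u l (Suc m)"
proof -
  have N_carrier: "N \<in> carrier_mat (Suc (Suc m)) (Suc (Suc m))"
    by (simp add: N_def cyclic_tridiag_mat_def mat_delete_def)
  \<comment> \<open>Removing the row and column of \<gamma> from N leaves an upper triangular matrix
    with diagonal l 0, ..., l m.\<close>
  have "det (mat_delete N 0 (Suc m)) = prod_list (diag_mat (mat_delete N 0 (Suc m)))"
    by (rule det_upper_triangular[of _ "Suc m"])
      (auto simp: upper_triangular_def N_def cyclic_tridiag_mat_def mat_delete_def)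
  also have "\<dots> = (\<Prod>r<Suc m. l r)"
    by (subst prod_list_diag_prod)
      (auto simp: N_def cyclic_tridiag_mat_def mat_delete_def atLeast0LessThan)
  finally have minor_corner: "det (mat_delete N 0 (Suc m)) = (\<Prod>r<Suc m. l r)" .
  have minor_diag: "mat_delete N (Suc m) (Suc m) = tridiag_mat (Suc m) d u l"
    by (rule eq_matI) (auto simp: N_def tridiag_mat_def cyclic_tridiag_mat_def mat_delete_def)
  show ?thesis
    by (subst laplace_expansion_column_sparse[OF N_carrier, of "Suc m" "{0, Suc m}"])
      (auto simp: cofactor_def minor_corner minor_diag det_tridiag_mat,
       auto simp: N_def cyclic_tridiag_mat_def mat_delete_def)
qed

lemma det_cyclic_tridiag_mat_delete_last_row_corner:
  fixes m :: nat and d u l :: "nat \<Rightarrow> 'a::comm_ring_1" and \<beta> \<gamma> :: 'a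
  defines "N \<equiv> mat_delete (cyclic_tridiag_mat (Suc (Suc (Suc m))) d u l \<beta> \<gamma>) (Suc (Suc m)) 0"
  shows "det N = u 0 * (\<Prod>r<Suc m. u (Suc r))
    + \<gamma> * (-1)^(Suc m) * continuant (\<lambda>i. d (Suc i)) (\<lambda>i. u (Suc i)) (\<lambda>i. l (Suc i)) (Suc m)"
proof -
  have N_carrier: "N \<in> carrier_mat (Suc (Suc m)) (Suc (Suc m))"
    by (simp add: N_def cyclic_tridiag_mat_def mat_delete_def)
  \<comment> \<open>Removing the row and column of u 0 from N leaves a lower triangular matrix with
    diagonal u 1, ..., u (m+1).\<close>
  have "det (mat_delete N 0 0) = prod_list (diag_mat (mat_delete N 0 0))"
    by (rule det_lower_triangular[of "Suc m"])
      (auto simp: N_def cyclic_tridiag_mat_def mat_delete_def)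
  also have "\<dots> = (\<Prod>r<Suc m. u (Suc r))"
    by (subst prod_list_diag_prod)
      (auto simp: N_def cyclic_tridiag_mat_def mat_delete_def atLeast0LessThan)
  finally have minor_diag: "det (mat_delete N 0 0) = (\<Prod>r<Suc m. u (Suc r))" .
  have minor_corner: "mat_delete N 0 (Suc m)
      = tridiag_mat (Suc m) (\<lambda>i. d (Suc i)) (\<lambda>i. u (Suc i)) (\<lambda>i. l (Suc i))"
    by (rule eq_matI) (auto simp: N_def tridiag_mat_def cyclic_tridiag_mat_def mat_delete_def)
  show ?thesis
    by (subst laplace_expansion_row_sparse[OF N_carrier, of 0 "{0, Suc m}"])
      (auto simp: cofactor_def minor_diag minor_corner det_tridiag_mat,
       auto simp: N_def cyclic_tridiag_mat_def mat_delete_def)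
qed

lemma det_cyclic_tridiag_mat_Suc_Suc_Suc:
  fixes m :: nat and d u l :: "nat \<Rightarrow> 'a::comm_ring_1"
  defines "n \<equiv> Suc (Suc (Suc m))"
  shows "det (cyclic_tridiag_mat n d u l \<beta> \<gamma>) = continuant d u l n
    - \<beta> * \<gamma> * continuant (\<lambda>i. d (Suc i)) (\<lambda>i. u (Suc i)) (\<lambda>i. l (Suc i)) (Suc m)
    + (-1)^m * (\<gamma> * (\<Prod>r<Suc (Suc m). l r) + \<beta> * (\<Prod>r<Suc (Suc m). u r))"
proof -
  let ?M = "cyclic_tridiag_mat n d u l \<beta> \<gamma>"
  have minor_diag: "mat_delete ?M (Suc (Suc m)) (Suc (Suc m)) = tridiag_mat (Suc (Suc m)) d u l"
    by (rule eq_matI) (auto simp: n_def tridiag_mat_def cyclic_tridiag_mat_def mat_delete_def)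
  have "det ?M = \<beta> * cofactor ?M (Suc (Suc m)) 0
      + l (Suc m) * cofactor ?M (Suc (Suc m)) (Suc m)
      + d (Suc (Suc m)) * cofactor ?M (Suc (Suc m)) (Suc (Suc m))"
    by (subst laplace_expansion_row_sparse[of _ n "Suc (Suc m)" "{0, Suc m, Suc (Suc m)}"])
      (auto simp: n_def cyclic_tridiag_mat_def)
  also have "\<dots> = \<beta> * (-1)^m * det (mat_delete ?M (Suc (Suc m)) 0)
      - l (Suc m) * det (mat_delete ?M (Suc (Suc m)) (Suc m))
      + d (Suc (Suc m)) * continuant d u l (Suc (Suc m))"
    by (simp add: cofactor_def minor_diag det_tridiag_mat)
  also have "\<dots> = continuant d u l n
      - \<beta> * \<gamma> * continuant (\<lambda>i. d (Suc i)) (\<lambda>i. u (Suc i)) (\<lambda>i. l (Suc i)) (Suc m)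
      + (-1)^m * (\<gamma> * (\<Prod>r<Suc (Suc m). l r) + \<beta> * (\<Prod>r<Suc (Suc m). u r))"
    unfolding n_def det_cyclic_tridiag_mat_delete_last_row_subdiag
      det_cyclic_tridiag_mat_delete_last_row_corner
      prod.lessThan_Suc_shift[of u]
    by (simp add: algebra_simps)
  finally show ?thesis .
qed

lemma det_cyclic_tridiag_mat:
  fixes d u l :: "nat \<Rightarrow> 'a::comm_ring_1"
  assumes "n \<ge> 1"
  shows "det (cyclic_tridiag_mat n d u l \<beta> \<gamma>) = continuant d u l n
    - \<beta> * \<gamma> * (if n = 1 then 0 else continuant (\<lambda>i. d (Suc i)) (\<lambda>i. u (Suc i)) (\<lambda>i. l (Suc i)) (n - 2))
    + (-1)^(n+1) * (\<gamma> * (\<Prod>r<n-1. l r) + \<beta> * (\<Prod>r<n-1. u r))"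
proof -
  consider "n = 1" | "n = 2" | m where "n = Suc (Suc (Suc m))"
    using assms by atomize_elim presburger
  then show ?thesis
  proof cases
    case 1
    then show ?thesis by (subst det_single) (auto simp: cyclic_tridiag_mat_def)
  next
    case 2
    let ?M = "cyclic_tridiag_mat 2 d u l \<beta> \<gamma>"
    have "det ?M = ?M $$ (1, 0) * cofactor ?M 1 0 + ?M $$ (1, 1) * cofactor ?M 1 1"
      by (subst laplace_expansion_row_sparse[of _ 2 1 "{0, 1}"]) (auto simp: cyclic_tridiag_mat_def)
    also have "cofactor ?M 1 0 = - (u 0 + \<gamma>)"
      unfolding cofactor_def by (subst det_single) (auto simp: mat_delete_def cyclic_tridiag_mat_def)
    also have "cofactor ?M 1 1 = d 0"
      unfolding cofactor_def by (subst det_single) (auto simp: mat_delete_def cyclic_tridiag_mat_def)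
    finally show ?thesis
      using 2 by (simp add: cyclic_tridiag_mat_def numeral_2_eq_2 algebra_simps)
  next
    case 3
    then show ?thesis using det_cyclic_tridiag_mat_Suc_Suc_Suc[of m d u l \<beta> \<gamma>] by simp
  qed
qed

lemma poly_continuant:
  "poly (continuant d u l n) x = continuant (\<lambda>i. poly (d i) x) (\<lambda>i. poly (u i) x) (\<lambda>i. poly (l i) x) n"
  by (induction d u l n rule: continuant.induct) auto

definition tridiag_charpoly :: "(nat \<Rightarrow> 'a::comm_ring_1) \<Rightarrow> (nat \<Rightarrow> 'a) \<Rightarrow> (nat \<Rightarrow> 'a) \<Rightarrow> nat \<Rightarrow> 'a poly"
  where "tridiag_charpoly d u l n = continuant (\<lambda>i. [:d i, -1:]) (\<lambda>i. [:u i:]) (\<lambda>i. [:l i:]) n"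

lemma tridiag_charpoly_Suc_Suc:
  "tridiag_charpoly d u l (Suc (Suc n)) = smult (d (Suc n)) (tridiag_charpoly d u l (Suc n))
     - pCons 0 (tridiag_charpoly d u l (Suc n)) - smult (u n * l n) (tridiag_charpoly d u l n)"
  by (simp add: tridiag_charpoly_def mult_pCons_left mult.commute[of "u n" "l n"])

lemma poly_tridiag_charpoly:
  "poly (tridiag_charpoly d u l n) x = continuant (\<lambda>i. d i - x) u l n"
  by (simp add: tridiag_charpoly_def poly_continuant)

lemma degree_tridiag_charpoly_le: "degree (tridiag_charpoly d u l n) \<le> n"
proof (induction n rule: induct_nat_012)
  case (ge2 n)
  show ?case
    unfolding tridiag_charpoly_Suc_Suc
    by (intro degree_diff_le order.trans[OF degree_smult_le] order.trans[OF degree_pCons_le])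
      (use ge2.IH in auto)
qed (auto simp: tridiag_charpoly_def)

lemma coeff_tridiag_charpoly_top: "coeff (tridiag_charpoly d u l n) n = (-1)^n"
proof (induction n rule: induct_nat_012)
  case (ge2 n)
  have "coeff (tridiag_charpoly d u l (Suc n)) (Suc (Suc n)) = 0"
    "coeff (tridiag_charpoly d u l n) (Suc (Suc n)) = 0"
    by (auto intro!: coeff_eq_0 le_less_trans[OF degree_tridiag_charpoly_le])
  then show ?case by (simp add: tridiag_charpoly_Suc_Suc ge2.IH)
qed (auto simp: tridiag_charpoly_def)

lemma degree_tridiag_charpoly:
  fixes d :: "nat \<Rightarrow> 'a::comm_ring_1"
  shows "degree (tridiag_charpoly d u l n) = n"
proof (rule antisym[OF degree_tridiag_charpoly_le le_degree])
  have "(-1::'a)^n * (-1)^n = 1" by (simp flip: power_mult_distrib)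
  then show "coeff (tridiag_charpoly d u l n) n \<noteq> 0"
    by (metis coeff_tridiag_charpoly_top mult_zero_left zero_neq_one)
qed

lemma finite_card_poly_square_eq:
  fixes g :: "'a::idom poly"
  assumes "degree g \<ge> 1"
  shows "finite {x. poly g x * poly g x = e}" and "card {x. poly g x * poly g x = e} \<le> 2 * degree g"
proof -
  define h where "h = g * g + [:-e:]"
  have "g \<noteq> 0" using assms by auto
  then have deg_h: "degree h = 2 * degree g"
    unfolding h_def by (subst degree_add_eq_left) (use assms in \<open>auto simp: degree_mult_eq\<close>)
  then have "h \<noteq> 0" using assms by auto
  moreover have roots: "{x. poly g x * poly g x = e} = {x. poly h x = 0}"
    by (auto simp: h_def)
  ultimately show "finite {x. poly g x * poly g x = e}"
    and "card {x. poly g x * poly g x = e} \<le> 2 * degree g"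
    using poly_roots_finite card_poly_roots_bound deg_h by (metis roots)+
qed

lemma Laurent_trinomial_double_root:
  fixes C B G z :: "'a::real_normed_field" and F :: "'a \<Rightarrow> 'a"
  assumes z: "z \<noteq> 0" and root: "F z = 0" and deriv: "(F has_field_derivative 0) (at z)"
    and F: "\<And>w. w \<noteq> 0 \<Longrightarrow> F w = C * w + B * inverse w + G"
  shows "G * G = 4 * C * B"
proof -
  have "((\<lambda>w. C * w + B * inverse w + G) has_field_derivative (C - B * inverse (z^2))) (at z)"
    using z by (auto intro!: derivative_eq_intros simp: power2_eq_square field_simps)
  then have "(F has_field_derivative (C - B * inverse (z^2))) (at z)"
    by (rule has_field_derivative_transform_within_open[of _ _ _ "- {0}"]) (use z F in auto)
  then have "C - B * inverse (z^2) = 0" using DERIV_unique deriv by blast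
  then have B: "B = C * z^2" using z by (simp add: field_simps)
  have "C * z + C * z^2 * inverse z + G = 0" using root F[OF z] by (simp add: B)
  then have "G = - (2 * C * z)" using z by (simp add: power2_eq_square field_simps eq_neg_iff_add_eq_0)
  then show ?thesis by (simp add: B power2_eq_square)
qed

lemma symbol_minus_scalar:
  "symbol k a b c z - lam \<cdot>\<^sub>m 1\<^sub>m k = cyclic_tridiag_mat k (\<lambda>i. a (Suc i) - lam)
     (\<lambda>i. b (Suc i)) (\<lambda>i. c (Suc i)) (b k * inverse z) (c k * z)"
  by (rule eq_matI) (auto simp: symbol_def A0_def cyclic_tridiag_mat_def)

lemma A0_minus_scalar:
  "A0 k a b c - lam \<cdot>\<^sub>m 1\<^sub>m k = tridiag_mat k (\<lambda>i. a (Suc i) - lam) (\<lambda>i. b (Suc i)) (\<lambda>i. c (Suc i))"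
  by (rule eq_matI) (auto simp: A0_def tridiag_mat_def)

lemma pdet_eq_continuant:
  "pdet k a b c lam = (if k = 1 then 0 else
     continuant (\<lambda>i. a (Suc (Suc i)) - lam) (\<lambda>i. b (Suc (Suc i))) (\<lambda>i. c (Suc (Suc i))) (k - 2))"
proof -
  have "mat (k-2) (k-2) (\<lambda>(i,j). (if i = j then a (i+2) - lam else 0)
      + (if j = i + 1 then b (i+2) else 0) + (if i = j + 1 then c (j+2) else 0))
    = tridiag_mat (k-2) (\<lambda>i. a (Suc (Suc i)) - lam) (\<lambda>i. b (Suc (Suc i))) (\<lambda>i. c (Suc (Suc i)))"
    by (rule eq_matI) (auto simp: tridiag_mat_def)
  then show ?thesis by (simp add: pdet_def det_tridiag_mat)
qed

lemma det_symbol_minus_scalar: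
  assumes "k \<ge> 1" and "z \<noteq> 0"
  shows "det (symbol k a b c z - lam \<cdot>\<^sub>m 1\<^sub>m k)
    = (-1)^(k+1) * (\<Prod>i=1..k. c i) * z + (-1)^(k+1) * (\<Prod>i=1..k. b i) * inverse z
      + (det (A0 k a b c - lam \<cdot>\<^sub>m 1\<^sub>m k) - b k * c k * pdet k a b c lam)"
proof -
  obtain k' where k: "k = Suc k'" using assms by (cases k) auto
  have "(\<Prod>i=1..k. c i) = c k * (\<Prod>r<k-1. c (Suc r))" "(\<Prod>i=1..k. b i) = b k * (\<Prod>r<k-1. b (Suc r))"
    unfolding k by (simp_all add: prod.atLeast1_atMost_eq mult.commute)
  then show ?thesis
    using assms(2)
    by (simp add: symbol_minus_scalar det_cyclic_tridiag_mat[OF assms(1)] A0_minus_scalar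
        det_tridiag_mat pdet_eq_continuant algebra_simps)
qed

lemma symbol_constant_term_poly:
  assumes "k \<ge> 1"
  obtains g :: "complex poly" where "degree g = k"
    and "\<And>lam. poly g lam = det (A0 k a b c - lam \<cdot>\<^sub>m 1\<^sub>m k) - b k * c k * pdet k a b c lam"
proof
  define P where "P = tridiag_charpoly (\<lambda>i. a (Suc i)) (\<lambda>i. b (Suc i)) (\<lambda>i. c (Suc i)) k"
  define Q where "Q = (if k = 1 then 0 else
    tridiag_charpoly (\<lambda>i. a (Suc (Suc i))) (\<lambda>i. b (Suc (Suc i))) (\<lambda>i. c (Suc (Suc i))) (k - 2))"
  have "degree (smult (- (b k * c k)) Q) < degree P"
    using assms degree_smult_le[of _ Q]
    by (fastforce simp: P_def Q_def degree_tridiag_charpoly)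
  then have "degree (P + smult (- (b k * c k)) Q) = degree P"
    by (rule degree_add_eq_left)
  then show "degree (P + smult (- (b k * c k)) Q) = k"
    by (simp only: P_def degree_tridiag_charpoly)
  show "poly (P + smult (- (b k * c k)) Q) lam
      = det (A0 k a b c - lam \<cdot>\<^sub>m 1\<^sub>m k) - b k * c k * pdet k a b c lam" for lam
    by (simp add: P_def Q_def poly_tridiag_charpoly A0_minus_scalar det_tridiag_mat pdet_eq_continuant)
qed

theorem lemmaA1:
  fixes k :: nat and a b c :: "nat \<Rightarrow> complex"
  assumes "k \<ge> 1"
  shows "(\<forall>lam z. z \<noteq> 0 \<longrightarrow>
           det (symbol k a b c z - lam \<cdot>\<^sub>m 1\<^sub>m k)
             = (-1)^(k+1) * (\<Prod>i=1..k. c i) * z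
             + (-1)^(k+1) * (\<Prod>i=1..k. b i) * inverse z
             + (det (A0 k a b c - lam \<cdot>\<^sub>m 1\<^sub>m k) - b k * c k * pdet k a b c lam))
       \<and> (\<exists>g :: complex poly. degree g = k \<and>
           (\<forall>lam. poly g lam = det (A0 k a b c - lam \<cdot>\<^sub>m 1\<^sub>m k) - b k * c k * pdet k a b c lam))
       \<and> finite {lam. \<exists>z. double_root k a b c lam z}
       \<and> card {lam. \<exists>z. double_root k a b c lam z} \<le> 2 * k"
proof -
  let ?C = "(-1)^(k+1) * (\<Prod>i=1..k. c i) :: complex"
  let ?B = "(-1)^(k+1) * (\<Prod>i=1..k. b i) :: complex"
  obtain g where deg_g: "degree g = k" and g: "\<And>lam. poly g lam
      = det (A0 k a b c - lam \<cdot>\<^sub>m 1\<^sub>m k) - b k * c k * pdet k a b c lam"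
    using symbol_constant_term_poly[OF assms] by blast
  have double_roots: "{lam. \<exists>z. double_root k a b c lam z}
      \<subseteq> {lam. poly g lam * poly g lam = 4 * ?C * ?B}"
  proof safe
    fix lam z
    let ?F = "\<lambda>w. det (symbol k a b c w - lam \<cdot>\<^sub>m 1\<^sub>m k)"
    assume "double_root k a b c lam z"
    then have "z \<noteq> 0" "?F z = 0" "(?F has_field_derivative 0) (at z)"
      unfolding double_root_def by auto
    then show "poly g lam * poly g lam = 4 * ?C * ?B"
      unfolding g by (rule Laurent_trinomial_double_root) (rule det_symbol_minus_scalar[OF assms])
  qed
  have level_set: "finite {lam. poly g lam * poly g lam = 4 * ?C * ?B}"
    "card {lam. poly g lam * poly g lam = 4 * ?C * ?B} \<le> 2 * k"
    using finite_card_poly_square_eq[of g] deg_g assms by auto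
  show ?thesis
  proof (intro conjI allI impI exI)
    show "finite {lam. \<exists>z. double_root k a b c lam z}"
      using finite_subset[OF double_roots level_set(1)] .
    show "card {lam. \<exists>z. double_root k a b c lam z} \<le> 2 * k"
      using card_mono[OF level_set(1) double_roots] level_set(2) by linarith
  qed (use det_symbol_minus_scalar[OF assms] deg_g g in auto)
qed

end
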